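(* In the social learning model with Gaussian signals, for every $\varepsilon>0$ there exists $k>0$ such that for all $t\ge 1$, $$\mathbb{P}(T_1=t)\ge\frac{k}{t^{1+\varepsilon}}.$$
   Context: Social learning model. A state $\theta\in\{-1,+1\}$ is drawn with $\mathbb{P}(\theta=+1)=\mathbb{P}(\theta=-1)=1/2$. Agents $t=1,2,\dots$ receive private signals $s_t\in\mathbb{R}$ that are i.i.d. conditionally on $\theta$, with CDF $F_+$ if $\theta=+1$ and $F_-$ if $\theta=-1$; $F_+$ and $F_-$ are mutually absolutely continuous. Let $L_t=\log\frac{\mathbb{P}(\theta=+1\mid s_t)}{\mathbb{P}(\theta=-1\mid s_t)}$ be the private log-likelihood ratio, and let $G_+$, $G_-$ denote the CDFs of $L_t$ conditional on $\theta=+1$, $\theta=-1$ respectively. Signals are assumed unbounded: for every $M\in\mathbb{R}$, $\mathbb{P}(L_t>M)>0$ and $\mathbb{P}(L_t<-M)>0$. Agent $t$ observes $a_1,\dots,a_{t-1}$ and her own signal and chooses $a_t\in\{-1,+1\}$ (utility $1$ if $a_t=\theta$, else $0$). The public belief is $\mu_t=\mathbb{P}(\theta=+1\mid a_1,\dots,a_{t-1})$ and $\ell_t=\log\frac{\mu_t}{1-\mu_t}$ (so $\ell_1=0$). In equilibrium $a_t=+1$ iff $\ell_t+L_t>0$, and otherwise $a_t=-1$. Consequently $\ell_{t+1}=\ell_t+D_+(\ell_t)$ if $a_t=+1$ and $\ell_{t+1}=\ell_t+D_-(\ell_t)$ if $a_t=-1$, where $D_+(x)=\log\frac{1-G_+(-x)}{1-G_-(-x)}$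 and $D_-(x)=\log\frac{G_+(-x)}{G_-(-x)}$. We write $\mathbb{P}_+(\cdot)=\mathbb{P}(\cdot\mid\theta=+1)$ and $\mathbb{E}_+$ for the corresponding expectation. Gaussian signals: $F_+$ is the normal distribution with mean $+1$ and variance $\sigma^2$, and $F_-$ is the normal distribution with mean $-1$ and variance $\sigma^2$, for some $\sigma>0$. The time of first mistake is $T_1=\min\{t: a_t\ne\theta\}$ if $a_t\neq\theta$ for some $t$, and $T_1=0$ otherwise. *)

theory Defs
  imports "HOL-Probability.Probability"
begin

definition sig_dist :: "real \<Rightarrow> real \<Rightarrow> real measure" where
  "sig_dist \<sigma> m = density lborel (normal_density m \<sigma>)"

text \<open>Private log-likelihood ratio L = log P(theta=+1|s)/P(theta=-1|s); with the uniform
  prior this is the log of the ratio of the two signal densities.\<close>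
definition Lpriv :: "real \<Rightarrow> real \<Rightarrow> real" where
  "Lpriv \<sigma> s = ln (normal_density 1 \<sigma> s / normal_density (-1) \<sigma> s)"

definition Gp :: "real \<Rightarrow> real \<Rightarrow> real" where
  "Gp \<sigma> x = measure (sig_dist \<sigma> 1) {s \<in> space (sig_dist \<sigma> 1). Lpriv \<sigma> s \<le> x}"

definition Gm :: "real \<Rightarrow> real \<Rightarrow> real" where
  "Gm \<sigma> x = measure (sig_dist \<sigma> (-1)) {s \<in> space (sig_dist \<sigma> (-1)). Lpriv \<sigma> s \<le> x}"

definition Dp :: "real \<Rightarrow> real \<Rightarrow> real" where
  "Dp \<sigma> x = ln ((1 - Gp \<sigma> (-x)) / (1 - Gm \<sigma> (-x)))"

definition Dm :: "real \<Rightarrow> real \<Rightarrow> real" where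
  "Dm \<sigma> x = ln (Gp \<sigma> (-x) / Gm \<sigma> (-x))"

text \<open>Public log-likelihood ratio ell_t along a realisation of signals \<omega> (signal of
  agent t is \<omega> t, t \<ge> 1; \<omega> 0 is unused). ell_1 = 0.\<close>
primrec ell :: "real \<Rightarrow> (nat \<Rightarrow> real) \<Rightarrow> nat \<Rightarrow> real" where
  "ell \<sigma> \<omega> 0 = 0"
| "ell \<sigma> \<omega> (Suc t) =
     (if t = 0 then 0
      else (let l = ell \<sigma> \<omega> t in
            if l + Lpriv \<sigma> (\<omega> t) > 0 then l + Dp \<sigma> l else l + Dm \<sigma> l))"

definition action :: "real \<Rightarrow> (nat \<Rightarrow> real) \<Rightarrow> nat \<Rightarrow> real" where
  "action \<sigma> \<omega> t = (if ell \<sigma> \<omega> t + Lpriv \<sigma> (\<omega> t) > 0 then 1 else -1)"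

text \<open>Time of first mistake (0 if no mistake is ever made), for state \<theta>.\<close>
definition T1 :: "real \<Rightarrow> real \<Rightarrow> (nat \<Rightarrow> real) \<Rightarrow> nat" where
  "T1 \<sigma> \<theta> \<omega> =
     (if \<exists>t\<ge>1. action \<sigma> \<omega> t \<noteq> \<theta> then (LEAST t. t \<ge> 1 \<and> action \<sigma> \<omega> t \<noteq> \<theta>) else 0)"

definition signals :: "real \<Rightarrow> real \<Rightarrow> (nat \<Rightarrow> real) measure" where
  "signals \<sigma> \<theta> = PiM UNIV (\<lambda>_. sig_dist \<sigma> \<theta>)"

definition probT1 :: "real \<Rightarrow> nat \<Rightarrow> real" where
  "probT1 \<sigma> t =
     1/2 * measure (signals \<sigma> 1) {\<omega> \<in> space (signals \<sigma> 1). T1 \<sigma> 1 \<omega> = t}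
   + 1/2 * measure (signals \<sigma> (-1)) {\<omega> \<in> space (signals \<sigma> (-1)). T1 \<sigma> (-1) \<omega> = t}"

end

theory Submission
  imports Defs
begin

text \<open>Under \<open>\<theta> = +1\<close>, the event \<open>T\<^sub>1 = t\<close> says that agents \<open>1, \<dots>, t - 1\<close> choose \<open>+1\<close> and
  agent \<open>t\<close> chooses \<open>-1\<close>. On it the public log-likelihood ratio follows a deterministic path
  \<open>\<ell>\<^sub>n\<close>, so by independence \<open>P\<^sub>+(T\<^sub>1 = t) = (\<Prod>n<t. 1 - G\<^sub>+(-\<ell>\<^sub>n)) * G\<^sub>+(-\<ell>\<^sub>t)\<close>.
  Since \<open>G\<^sub>+(x) \<le> exp x * G\<^sub>-(x)\<close>, each mistake probability \<open>G\<^sub>+(-\<ell>\<^sub>n)\<close> is dominated by the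
  decrease of \<open>exp (-\<ell>)\<close> in the next step; these probabilities are therefore summable and
  the product stays bounded away from \<open>0\<close>. On the other hand each step raises the belief by
  at most a constant times \<open>G\<^sub>-(-\<ell>)\<close>, so the path grows so slowly that
  \<open>G\<^sub>-(M - \<ell>\<^sub>t) \<ge> 1 / (K t)\<close>. For Gaussian signals a bounded shift costs only a power
  \<open>1 + \<epsilon>\<close> of the tail, \<open>G\<^sub>+(-(y + M)) \<ge> c * G\<^sub>-(-y) powr (1 + \<epsilon>)\<close>, hence
  \<open>G\<^sub>+(-\<ell>\<^sub>t) \<ge> c / t powr (1 + \<epsilon>)\<close>.\<close>

lemma sq_add_le:
  fixes v a e :: real assumes "e > 0"
  shows "(v + a)\<^sup>2 \<le> (1 + e) * v\<^sup>2 + (1 + 1 / e) * a\<^sup>2"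
proof -
  have "0 \<le> (e * v - a)\<^sup>2 / e" using assms by simp
  also have "(e * v - a)\<^sup>2 / e = e * v\<^sup>2 - 2 * v * a + a\<^sup>2 / e"
    using assms by (simp add: field_simps power2_eq_square)
  finally show ?thesis by (simp add: power2_eq_square algebra_simps)
qed

lemma exp_neg_div_le_one_minus:
  fixes q q0 :: real
  assumes "0 \<le> q" "q \<le> q0" "q0 < 1"
  shows "exp (- q / (1 - q0)) \<le> 1 - q"
proof -
  have "- ln (1 - q) = ln (1 / (1 - q))" using assms by (simp add: ln_div)
  also have "\<dots> \<le> 1 / (1 - q) - 1" using assms by (intro ln_le_minus_one) auto
  also have "\<dots> = q / (1 - q)" using assms by (simp add: field_simps)
  also have "\<dots> \<le> q / (1 - q0)" using assms by (intro divide_left_mono) auto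
  finally have "- q / (1 - q0) \<le> ln (1 - q)" by simp
  then show ?thesis using assms by (metis exp_le_cancel_iff exp_ln diff_gt_0_iff_gt le_less_trans)
qed

lemma sets_sig_dist [simp]: "sets (sig_dist \<sigma> m) = sets borel"
  by (simp add: sig_dist_def)

lemma space_sig_dist [simp]: "space (sig_dist \<sigma> m) = UNIV"
  by (simp add: sig_dist_def)

lemma prob_space_sig_dist: "\<sigma> > 0 \<Longrightarrow> prob_space (sig_dist \<sigma> m)"
  unfolding sig_dist_def by (rule prob_space_normal_density)

lemma Lpriv_measurable [measurable]: "Lpriv \<sigma> \<in> borel_measurable borel"
  unfolding Lpriv_def[abs_def] by measurable

lemma Lpriv_eq: assumes "\<sigma> > 0" shows "Lpriv \<sigma> s = 2 * s / \<sigma>\<^sup>2"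
proof -
  have "normal_density 1 \<sigma> s / normal_density (-1) \<sigma> s
      = exp (-(s - 1)\<^sup>2 / (2 * \<sigma>\<^sup>2) - (-(s + 1)\<^sup>2 / (2 * \<sigma>\<^sup>2)))"
    using assms by (simp add: normal_density_def flip: exp_diff)
  also have "-(s - 1)\<^sup>2 / (2 * \<sigma>\<^sup>2) - (-(s + 1)\<^sup>2 / (2 * \<sigma>\<^sup>2)) = 2 * s / \<sigma>\<^sup>2"
    using assms by (simp add: field_simps power2_eq_square)
  finally show ?thesis by (simp add: Lpriv_def)
qed

lemma normal_density_eq_exp_Lpriv:
  assumes "\<sigma> > 0" shows "normal_density 1 \<sigma> s = exp (Lpriv \<sigma> s) * normal_density (-1) \<sigma> s"
proof -
  have "normal_density 1 \<sigma> s > 0" "normal_density (-1) \<sigma> s > 0"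
    using assms by (simp_all add: normal_density_pos)
  then show ?thesis by (simp add: Lpriv_def)
qed

lemma Gp_eq_measure: "Gp \<sigma> x = measure (sig_dist \<sigma> 1) {s. Lpriv \<sigma> s \<le> x}"
  by (simp add: Gp_def)

lemma Gm_eq_measure: "Gm \<sigma> x = measure (sig_dist \<sigma> (-1)) {s. Lpriv \<sigma> s \<le> x}"
  by (simp add: Gm_def)

text \<open>\<open>ell_up \<sigma> n\<close> is the public belief \<open>ell\<close> of agent \<open>n\<close> when agents \<open>1, \<dots>, n - 1\<close> all chose
  \<open>+1\<close>; as for \<open>ell\<close>, agents are numbered from \<open>1\<close> and index \<open>0\<close> is a dummy.\<close>

primrec ell_up :: "real \<Rightarrow> nat \<Rightarrow> real" where
  "ell_up \<sigma> 0 = 0"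
| "ell_up \<sigma> (Suc t) = (if t = 0 then 0 else ell_up \<sigma> t + Dp \<sigma> (ell_up \<sigma> t))"

definition sig_cdf :: "real \<Rightarrow> real \<Rightarrow> real \<Rightarrow> real" where
  "sig_cdf \<sigma> m y = measure (sig_dist \<sigma> m) {..y}"

context
  fixes \<sigma> :: real
  assumes \<sigma>_pos: "\<sigma> > 0"
begin

lemma measure_sig_dist_le_scaled:
  assumes A: "A \<in> sets borel" and c: "c \<ge> 0"
    and dens: "\<And>s. s \<in> A \<Longrightarrow> normal_density m \<sigma> s \<le> c * normal_density m' \<sigma> s"
  shows "measure (sig_dist \<sigma> m) A \<le> c * measure (sig_dist \<sigma> m') A"
proof -
  interpret P: prob_space "sig_dist \<sigma> m" using \<sigma>_pos by (rule prob_space_sig_dist)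
  interpret P': prob_space "sig_dist \<sigma> m'" using \<sigma>_pos by (rule prob_space_sig_dist)
  have "emeasure (sig_dist \<sigma> m) A = (\<integral>\<^sup>+ s. ennreal (normal_density m \<sigma> s) * indicator A s \<partial>lborel)"
    unfolding sig_dist_def using A by (simp add: emeasure_density)
  also have "\<dots> \<le> (\<integral>\<^sup>+ s. ennreal c * (ennreal (normal_density m' \<sigma> s) * indicator A s) \<partial>lborel)"
    by (intro nn_integral_mono) (auto simp: indicator_def dens ennreal_mult[symmetric] c)
  also have "\<dots> = ennreal c * emeasure (sig_dist \<sigma> m') A"
    unfolding sig_dist_def using A by (simp add: nn_integral_cmult emeasure_density)
  finally show ?thesis
    using c by (simp add: P.emeasure_eq_measure P'.emeasure_eq_measure ennreal_mult'[symmetric])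
qed

lemma measure_sig_dist_unit_interval_ge:
  "exp (-(\<bar>y - m\<bar> + 1)\<^sup>2 / (2 * \<sigma>\<^sup>2)) / sqrt (2 * pi * \<sigma>\<^sup>2) \<le> measure (sig_dist \<sigma> m) {y - 1<..y}"
  (is "?c \<le> _")
proof -
  interpret P: prob_space "sig_dist \<sigma> m" using \<sigma>_pos by (rule prob_space_sig_dist)
  have dens: "?c \<le> normal_density m \<sigma> s" if "s \<in> {y - 1<..y}" for s
  proof -
    have "(s - m)\<^sup>2 \<le> (\<bar>y - m\<bar> + 1)\<^sup>2"
      using that by (subst abs_le_square_iff[symmetric]) auto
    then show ?thesis
      unfolding normal_density_def using \<sigma>_pos by (simp add: divide_right_mono frac_le)
  qed
  have "ennreal ?c = (\<integral>\<^sup>+ s. ennreal ?c * indicator {y - 1<..y} s \<partial>lborel)"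
    by (simp add: nn_integral_cmult_indicator)
  also have "\<dots> \<le> (\<integral>\<^sup>+ s. ennreal (normal_density m \<sigma> s) * indicator {y - 1<..y} s \<partial>lborel)"
    using dens by (intro nn_integral_mono) (auto simp: indicator_def intro!: ennreal_leI)
  also have "\<dots> = emeasure (sig_dist \<sigma> m) {y - 1<..y}"
    unfolding sig_dist_def by (simp add: emeasure_density)
  finally show ?thesis by (simp add: P.emeasure_eq_measure)
qed

lemma sig_cdf_ge_exp:
  "exp (-(\<bar>y - m\<bar> + 1)\<^sup>2 / (2 * \<sigma>\<^sup>2)) / sqrt (2 * pi * \<sigma>\<^sup>2) \<le> sig_cdf \<sigma> m y"
proof -
  interpret P: prob_space "sig_dist \<sigma> m" using \<sigma>_pos by (rule prob_space_sig_dist)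
  have "measure (sig_dist \<sigma> m) {y - 1<..y} \<le> sig_cdf \<sigma> m y"
    unfolding sig_cdf_def by (intro P.finite_measure_mono) auto
  with measure_sig_dist_unit_interval_ge show ?thesis by (rule order_trans)
qed

lemma sig_cdf_mono: assumes "y \<le> y'" shows "sig_cdf \<sigma> m y \<le> sig_cdf \<sigma> m y'"
proof -
  interpret P: prob_space "sig_dist \<sigma> m" using \<sigma>_pos by (rule prob_space_sig_dist)
  show ?thesis unfolding sig_cdf_def using assms by (intro P.finite_measure_mono) auto
qed

lemma sig_cdf_pos: "sig_cdf \<sigma> m y > 0"
  using \<sigma>_pos by (intro less_le_trans[OF _ sig_cdf_ge_exp]) simp

lemma sig_cdf_less_1: "sig_cdf \<sigma> m y < 1"
proof -
  interpret P: prob_space "sig_dist \<sigma> m" using \<sigma>_pos by (rule prob_space_sig_dist)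
  have "0 < exp (-(\<bar>y + 1 - m\<bar> + 1)\<^sup>2 / (2 * \<sigma>\<^sup>2)) / sqrt (2 * pi * \<sigma>\<^sup>2)"
    using \<sigma>_pos by simp
  also have "\<dots> \<le> measure (sig_dist \<sigma> m) {y<..y + 1}"
    using measure_sig_dist_unit_interval_ge[of "y + 1" m] by simp
  also have "\<dots> \<le> measure (sig_dist \<sigma> m) (UNIV - {..y})"
    by (intro P.finite_measure_mono) auto
  also have "\<dots> = 1 - sig_cdf \<sigma> m y"
    unfolding sig_cdf_def using P.prob_compl[of "{..y}"] by simp
  finally show ?thesis by simp
qed

lemma sig_cdf_le_exp: "sig_cdf \<sigma> m y \<le> exp (-(max (m - y) 0)\<^sup>2 / (2 * \<sigma>\<^sup>2))"
proof (cases "y \<le> m")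
  case True
  interpret P: prob_space "sig_dist \<sigma> y" using \<sigma>_pos by (rule prob_space_sig_dist)
  have "sig_cdf \<sigma> m y \<le> exp (-(m - y)\<^sup>2 / (2 * \<sigma>\<^sup>2)) * measure (sig_dist \<sigma> y) {..y}"
    unfolding sig_cdf_def
  proof (rule measure_sig_dist_le_scaled)
    fix s assume s: "s \<in> {..y}"
    have "(m - y)\<^sup>2 + (s - y)\<^sup>2 \<le> (s - m)\<^sup>2"
      using mult_nonneg_nonneg[of "m - y" "y - s"] True s by (simp add: power2_eq_square algebra_simps)
    then have "-(s - m)\<^sup>2 / (2 * \<sigma>\<^sup>2) \<le> -(m - y)\<^sup>2 / (2 * \<sigma>\<^sup>2) + -(s - y)\<^sup>2 / (2 * \<sigma>\<^sup>2)"
      using \<sigma>_pos by (simp add: field_simps)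
    then show "normal_density m \<sigma> s \<le> exp (-(m - y)\<^sup>2 / (2 * \<sigma>\<^sup>2)) * normal_density y \<sigma> s"
      unfolding normal_density_def by (simp add: divide_right_mono flip: exp_add)
  qed auto
  also have "\<dots> \<le> exp (-(m - y)\<^sup>2 / (2 * \<sigma>\<^sup>2))"
    by (simp add: mult_left_le)
  finally show ?thesis using True by simp
next
  case False
  interpret P: prob_space "sig_dist \<sigma> m" using \<sigma>_pos by (rule prob_space_sig_dist)
  show ?thesis using False by (simp add: sig_cdf_def)
qed

lemma sig_cdf_shift_ge_powr:
  assumes \<epsilon>: "\<epsilon> > 0" and B: "B \<ge> 0"
  shows "\<exists>c>0. \<forall>u\<ge>0. c * sig_cdf \<sigma> m' (-u) powr (1 + \<epsilon>) \<le> sig_cdf \<sigma> m (-u - B)"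
proof -
  define A where "A = B + \<bar>m\<bar> + \<bar>m'\<bar> + 1"
  define q where "q = sqrt (2 * pi * \<sigma>\<^sup>2)"
  define c where "c = exp (-((1 + 1 / \<epsilon>) * A\<^sup>2) / (2 * \<sigma>\<^sup>2)) / q"
  have q: "q > 0" using \<sigma>_pos by (simp add: q_def)
  have "c > 0" using q by (simp add: c_def)
  have "c * sig_cdf \<sigma> m' (-u) powr (1 + \<epsilon>) \<le> sig_cdf \<sigma> m (-u - B)" if u: "u \<ge> 0" for u
  proof -
    define w where "w = max (m' + u) 0"
    have "sig_cdf \<sigma> m' (-u) powr (1 + \<epsilon>) \<le> exp (-w\<^sup>2 / (2 * \<sigma>\<^sup>2)) powr (1 + \<epsilon>)"
      using sig_cdf_le_exp[of m' "-u"] sig_cdf_pos[of m' "-u"] \<epsilon>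
      by (intro powr_mono2) (auto simp: w_def)
    also have "\<dots> = exp (-((1 + \<epsilon>) * w\<^sup>2) / (2 * \<sigma>\<^sup>2))"
      by (simp add: exp_powr_real)
    finally have upper: "sig_cdf \<sigma> m' (-u) powr (1 + \<epsilon>) \<le> exp (-((1 + \<epsilon>) * w\<^sup>2) / (2 * \<sigma>\<^sup>2))" .
    have "(\<bar>-u - B - m\<bar> + 1)\<^sup>2 \<le> (w + A)\<^sup>2"
      using u B by (intro power_mono) (auto simp: w_def A_def)
    also have "\<dots> \<le> (1 + \<epsilon>) * w\<^sup>2 + (1 + 1 / \<epsilon>) * A\<^sup>2"
      using \<epsilon> by (rule sq_add_le)
    finally have *: "-((1 + \<epsilon>) * w\<^sup>2 + (1 + 1 / \<epsilon>) * A\<^sup>2) / (2 * \<sigma>\<^sup>2) \<le> -(\<bar>-u - B - m\<bar> + 1)\<^sup>2 / (2 * \<sigma>\<^sup>2)"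
      by (intro divide_right_mono) auto
    have "c * sig_cdf \<sigma> m' (-u) powr (1 + \<epsilon>) \<le> c * exp (-((1 + \<epsilon>) * w\<^sup>2) / (2 * \<sigma>\<^sup>2))"
      using upper \<open>c > 0\<close> by (intro mult_left_mono) auto
    also have "\<dots> \<le> exp (-(\<bar>-u - B - m\<bar> + 1)\<^sup>2 / (2 * \<sigma>\<^sup>2)) / q"
      using * q by (simp add: c_def divide_right_mono add_divide_distrib diff_divide_distrib
          flip: exp_add)
    also have "\<dots> \<le> sig_cdf \<sigma> m (-u - B)"
      unfolding q_def by (rule sig_cdf_ge_exp)
    finally show ?thesis .
  qed
  with \<open>c > 0\<close> show ?thesis by blast
qed

lemma Gp_eq_sig_cdf: "Gp \<sigma> x = sig_cdf \<sigma> 1 (\<sigma>\<^sup>2 / 2 * x)"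
proof -
  have "{s. Lpriv \<sigma> s \<le> x} = {..\<sigma>\<^sup>2 / 2 * x}"
    using \<sigma>_pos by (auto simp: Lpriv_eq field_simps)
  then show ?thesis by (simp add: Gp_eq_measure sig_cdf_def)
qed

lemma Gm_eq_sig_cdf: "Gm \<sigma> x = sig_cdf \<sigma> (-1) (\<sigma>\<^sup>2 / 2 * x)"
proof -
  have "{s. Lpriv \<sigma> s \<le> x} = {..\<sigma>\<^sup>2 / 2 * x}"
    using \<sigma>_pos by (auto simp: Lpriv_eq field_simps)
  then show ?thesis by (simp add: Gm_eq_measure sig_cdf_def)
qed

lemma Gp_pos: "Gp \<sigma> x > 0" and Gm_pos: "Gm \<sigma> x > 0"
  and Gp_less_1: "Gp \<sigma> x < 1" and Gm_less_1: "Gm \<sigma> x < 1"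
  by (simp_all add: Gp_eq_sig_cdf Gm_eq_sig_cdf sig_cdf_pos sig_cdf_less_1)

lemma Gp_mono: "x \<le> y \<Longrightarrow> Gp \<sigma> x \<le> Gp \<sigma> y"
  and Gm_mono: "x \<le> y \<Longrightarrow> Gm \<sigma> x \<le> Gm \<sigma> y"
  using \<sigma>_pos by (simp_all add: Gp_eq_sig_cdf Gm_eq_sig_cdf sig_cdf_mono)

lemma Gp_le_exp_Gm: "Gp \<sigma> x \<le> exp x * Gm \<sigma> x"
  unfolding Gp_eq_measure Gm_eq_measure
proof (rule measure_sig_dist_le_scaled)
  fix s assume "s \<in> {s. Lpriv \<sigma> s \<le> x}"
  then show "normal_density 1 \<sigma> s \<le> exp x * normal_density (-1) \<sigma> s"
    by (simp add: normal_density_eq_exp_Lpriv[OF \<sigma>_pos] mult_right_mono)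
qed auto

lemma Gp_less_Gm: assumes "x \<le> 0" shows "Gp \<sigma> x < Gm \<sigma> x"
proof -
  interpret P: prob_space "sig_dist \<sigma> 1" using \<sigma>_pos by (rule prob_space_sig_dist)
  interpret M: prob_space "sig_dist \<sigma> (-1)" using \<sigma>_pos by (rule prob_space_sig_dist)
  define I where "I = {s. x - 1 < Lpriv \<sigma> s \<and> Lpriv \<sigma> s \<le> x}"
  have split: "{s. Lpriv \<sigma> s \<le> x} = {s. Lpriv \<sigma> s \<le> x - 1} \<union> I"
    by (auto simp: I_def)
  have "measure (sig_dist \<sigma> 1) I \<le> 1 * measure (sig_dist \<sigma> (-1)) I"
  proof (rule measure_sig_dist_le_scaled)
    fix s assume "s \<in> I"
    then have "exp (Lpriv \<sigma> s) \<le> 1" using assms by (simp add: I_def)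
    then show "normal_density 1 \<sigma> s \<le> 1 * normal_density (-1) \<sigma> s"
      by (simp add: normal_density_eq_exp_Lpriv[OF \<sigma>_pos] mult_left_le_one_le)
  qed (auto simp: I_def)
  moreover have "Gp \<sigma> (x - 1) < Gm \<sigma> (x - 1)"
  proof -
    have "exp (x - 1) * Gm \<sigma> (x - 1) < Gm \<sigma> (x - 1)"
      using Gm_pos[of "x - 1"] assms by simp
    with Gp_le_exp_Gm[of "x - 1"] show ?thesis by linarith
  qed
  moreover have "Gp \<sigma> x = Gp \<sigma> (x - 1) + measure (sig_dist \<sigma> 1) I"
    unfolding Gp_eq_measure split by (subst P.finite_measure_Union) (auto simp: I_def)
  moreover have "Gm \<sigma> x = Gm \<sigma> (x - 1) + measure (sig_dist \<sigma> (-1)) I"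
    unfolding Gm_eq_measure split by (subst M.finite_measure_Union) (auto simp: I_def)
  ultimately show ?thesis by simp
qed

lemma Gp_le_Gm: "x \<le> 0 \<Longrightarrow> Gp \<sigma> x \<le> Gm \<sigma> x"
  using Gp_less_Gm by (simp add: less_imp_le)

lemma Dp_nonneg: "x \<ge> 0 \<Longrightarrow> Dp \<sigma> x \<ge> 0"
  using Gp_le_Gm[of "-x"] Gm_less_1[of "-x"] by (simp add: Dp_def)

lemma Dp_0_pos: "Dp \<sigma> 0 > 0"
  using Gp_less_Gm[of 0] Gm_less_1[of 0] by (simp add: Dp_def)

lemma Dp_le: assumes "x \<ge> 0" shows "Dp \<sigma> x \<le> Gm \<sigma> (-x) / (1 - Gm \<sigma> 0)"
proof -
  have g: "0 < 1 - Gp \<sigma> (-x)" "0 < 1 - Gm \<sigma> (-x)"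
    using Gp_less_1 Gm_less_1 by auto
  have "Dp \<sigma> x \<le> (1 - Gp \<sigma> (-x)) / (1 - Gm \<sigma> (-x)) - 1"
    unfolding Dp_def using g by (intro ln_le_minus_one) simp
  also have "\<dots> \<le> Gm \<sigma> (-x) / (1 - Gm \<sigma> (-x))"
    using g Gp_pos[of "-x"] by (simp add: field_simps)
  also have "\<dots> \<le> Gm \<sigma> (-x) / (1 - Gm \<sigma> 0)"
    using g Gm_mono[of "-x" 0] assms Gm_pos[of "-x"] Gm_less_1[of 0] by (intro divide_left_mono) auto
  finally show ?thesis .
qed

lemma exp_neg_add_Dp: "exp (-(x + Dp \<sigma> x)) = exp (-x) * ((1 - Gm \<sigma> (-x)) / (1 - Gp \<sigma> (-x)))"
proof -
  have "exp (- Dp \<sigma> x) = (1 - Gm \<sigma> (-x)) / (1 - Gp \<sigma> (-x))"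
    using Gp_less_1[of "-x"] Gm_less_1[of "-x"] by (simp add: Dp_def exp_minus)
  then show ?thesis by (metis exp_add minus_add_distrib)
qed

lemma Gp_le_step_telescope:
  assumes "Dp \<sigma> 0 \<le> x"
  shows "(1 - exp (- Dp \<sigma> 0)) * Gp \<sigma> (-x) \<le> exp (-x) - exp (-(x + Dp \<sigma> x))"
proof -
  let ?g = "Gp \<sigma> (-x)" and ?h = "Gm \<sigma> (-x)" and ?\<rho> = "exp (- Dp \<sigma> 0)"
  have x: "x \<ge> 0" using assms Dp_0_pos by linarith
  have g: "0 < ?g" "?g < 1" using Gp_pos Gp_less_1 by auto
  have gh: "?g \<le> exp (-x) * ?h" using Gp_le_exp_Gm[of "-x"] .
  have \<rho>: "exp (-x) \<le> ?\<rho>" "?\<rho> < 1" using assms Dp_0_pos by auto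
  have "(1 - ?\<rho>) * ?g \<le> (1 - ?\<rho>) * (exp (-x) * ?h)"
    using gh \<rho> by (intro mult_left_mono) auto
  also have "\<dots> = exp (-x) * (?h - ?\<rho> * ?h)" by (simp add: algebra_simps)
  also have "\<dots> \<le> exp (-x) * (?h - ?g)"
    using gh \<rho>(1) Gm_pos[of "-x"] by (intro mult_left_mono) (auto intro: order_trans mult_right_mono)
  also have "\<dots> \<le> exp (-x) * ((?h - ?g) / (1 - ?g))"
    using g Gp_le_Gm[of "-x"] x by (intro mult_left_mono) (auto simp: le_divide_eq mult_left_le)
  also have "\<dots> = exp (-x) - exp (-(x + Dp \<sigma> x))"
    unfolding exp_neg_add_Dp using g by (simp add: field_simps)
  finally show ?thesis .
qed

lemma Gp_shift_ge_Gm_powr: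
  assumes "\<epsilon> > 0" "M \<ge> 0"
  shows "\<exists>c>0. \<forall>y\<ge>0. c * Gm \<sigma> (-y) powr (1 + \<epsilon>) \<le> Gp \<sigma> (-(y + M))"
proof -
  obtain c where "c > 0" and c: "\<And>u. u \<ge> 0 \<Longrightarrow>
      c * sig_cdf \<sigma> (-1) (-u) powr (1 + \<epsilon>) \<le> sig_cdf \<sigma> 1 (-u - \<sigma>\<^sup>2 / 2 * M)"
    using sig_cdf_shift_ge_powr[OF assms(1), of "\<sigma>\<^sup>2 / 2 * M" "-1" 1] assms(2) by auto
  have "c * Gm \<sigma> (-y) powr (1 + \<epsilon>) \<le> Gp \<sigma> (-(y + M))" if "y \<ge> 0" for y
  proof -
    have arg: "-(\<sigma>\<^sup>2 / 2 * (y + M)) = -(\<sigma>\<^sup>2 / 2 * y) - \<sigma>\<^sup>2 / 2 * M"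
      by (simp add: field_simps)
    show ?thesis
      unfolding Gp_eq_sig_cdf Gm_eq_sig_cdf mult_minus_right arg using that by (intro c) simp
  qed
  with \<open>c > 0\<close> show ?thesis by blast
qed

lemma ell_up_nonneg: "ell_up \<sigma> n \<ge> 0"
  by (induction n) (auto intro: add_nonneg_nonneg Dp_nonneg)

lemma ell_up_mono: "m \<le> n \<Longrightarrow> ell_up \<sigma> m \<le> ell_up \<sigma> n"
proof (induction n rule: dec_induct)
  case (step n)
  then show ?case using Dp_nonneg[OF ell_up_nonneg, of n] by auto
qed simp

lemma ell_up_ge_Dp_0: "n \<ge> 2 \<Longrightarrow> Dp \<sigma> 0 \<le> ell_up \<sigma> n"
  using ell_up_mono[of 2 n] by (simp add: numeral_2_eq_2)

lemma sum_Gp_ell_up_le: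
  "(\<Sum>n\<in>{1..<N}. Gp \<sigma> (- ell_up \<sigma> n)) \<le> Gp \<sigma> 0 + 1 / (1 - exp (- Dp \<sigma> 0))"
proof -
  let ?\<rho> = "exp (- Dp \<sigma> 0)" and ?E = "\<lambda>n. - exp (- ell_up \<sigma> n)"
  have \<rho>: "?\<rho> < 1" using Dp_0_pos by simp
  have "(\<Sum>n\<in>{2..<N}. Gp \<sigma> (- ell_up \<sigma> n)) \<le> (\<Sum>n\<in>{2..<N}. (?E (Suc n) - ?E n) / (1 - ?\<rho>))"
    using \<rho> Gp_le_step_telescope[OF ell_up_ge_Dp_0]
    by (intro sum_mono) (simp add: le_divide_eq mult.commute)
  also have "\<dots> \<le> 1 / (1 - ?\<rho>)"
  proof (cases "2 \<le> N")
    case True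
    have "exp (- ell_up \<sigma> 2) - exp (- ell_up \<sigma> N) \<le> 1"
      using ell_up_nonneg[of 2] exp_gt_zero[of "- ell_up \<sigma> N"] exp_le_one_iff[of "- ell_up \<sigma> 2"]
      by linarith
    moreover have "(\<Sum>n\<in>{2..<N}. (?E (Suc n) - ?E n) / (1 - ?\<rho>)) = (?E N - ?E 2) / (1 - ?\<rho>)"
      using sum_Suc_diff'[OF True, of ?E] by (simp only: sum_divide_distrib[symmetric])
    ultimately show ?thesis using \<rho> by (simp add: divide_right_mono)
  qed (use \<rho> in simp)
  finally have "(\<Sum>n\<in>{2..<N}. Gp \<sigma> (- ell_up \<sigma> n)) \<le> 1 / (1 - ?\<rho>)" .
  moreover have "(\<Sum>n\<in>{1..<N}. Gp \<sigma> (- ell_up \<sigma> n)) \<le> Gp \<sigma> 0 + (\<Sum>n\<in>{2..<N}. Gp \<sigma> (- ell_up \<sigma> n))"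
  proof -
    have "(\<Sum>n\<in>{1..<N}. Gp \<sigma> (- ell_up \<sigma> n)) \<le> (\<Sum>n\<in>insert 1 {2..<N}. Gp \<sigma> (- ell_up \<sigma> n))"
      using Gp_pos by (intro sum_mono2) (auto intro: less_imp_le)
    then show ?thesis by simp
  qed
  ultimately show ?thesis by linarith
qed

lemma prod_no_mistake_ge: "\<exists>a>0. \<forall>N. a \<le> (\<Prod>n\<in>{1..<N}. 1 - Gp \<sigma> (- ell_up \<sigma> n))"
proof (intro exI conjI allI)
  let ?q0 = "Gp \<sigma> 0" and ?S = "Gp \<sigma> 0 + 1 / (1 - exp (- Dp \<sigma> 0))"
  have q0: "?q0 < 1" by (rule Gp_less_1)
  show "exp (- ?S / (1 - ?q0)) > 0" by simp
  fix N
  have "- ?S / (1 - ?q0) \<le> - (\<Sum>n\<in>{1..<N}. Gp \<sigma> (- ell_up \<sigma> n)) / (1 - ?q0)"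
    using sum_Gp_ell_up_le[of N] q0 by (intro divide_right_mono) auto
  then have "exp (- ?S / (1 - ?q0)) \<le> exp (- (\<Sum>n\<in>{1..<N}. Gp \<sigma> (- ell_up \<sigma> n)) / (1 - ?q0))"
    by simp
  also have "\<dots> = (\<Prod>n\<in>{1..<N}. exp (- Gp \<sigma> (- ell_up \<sigma> n) / (1 - ?q0)))"
  proof -
    have "- (\<Sum>n\<in>{1..<N}. Gp \<sigma> (- ell_up \<sigma> n)) / (1 - ?q0)
        = (\<Sum>n\<in>{1..<N}. - Gp \<sigma> (- ell_up \<sigma> n) / (1 - ?q0))"
      by (simp add: sum_negf sum_divide_distrib)
    then show ?thesis by (simp add: exp_sum)
  qed
  also have "\<dots> \<le> (\<Prod>n\<in>{1..<N}. 1 - Gp \<sigma> (- ell_up \<sigma> n))"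
    using ell_up_nonneg q0
    by (intro prod_mono conjI exp_neg_div_le_one_minus Gp_mono less_imp_le[OF Gp_pos])
      auto
  finally show "exp (- ?S / (1 - ?q0)) \<le> (\<Prod>n\<in>{1..<N}. 1 - Gp \<sigma> (- ell_up \<sigma> n))" .
qed

lemma ell_up_add_le:
  assumes "n \<ge> 1" "y \<le> ell_up \<sigma> n"
  shows "ell_up \<sigma> (n + j) \<le> ell_up \<sigma> n + j * (Gm \<sigma> (-y) / (1 - Gm \<sigma> 0))"
proof (induction j)
  case (Suc j)
  let ?x = "ell_up \<sigma> (n + j)"
  have "Dp \<sigma> ?x \<le> Gm \<sigma> (- ?x) / (1 - Gm \<sigma> 0)"
    by (rule Dp_le[OF ell_up_nonneg])
  also have "\<dots> \<le> Gm \<sigma> (-y) / (1 - Gm \<sigma> 0)"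
    using assms(2) ell_up_mono[of n "n + j"] Gm_less_1[of 0]
    by (intro divide_right_mono Gm_mono) auto
  moreover have "ell_up \<sigma> (n + Suc j) = ?x + Dp \<sigma> ?x" using assms(1) by simp
  moreover have "real (Suc j) * (Gm \<sigma> (-y) / (1 - Gm \<sigma> 0))
      = real j * (Gm \<sigma> (-y) / (1 - Gm \<sigma> 0)) + Gm \<sigma> (-y) / (1 - Gm \<sigma> 0)"
    by (simp add: ring_distribs add_divide_distrib)
  ultimately show ?case using Suc by linarith
qed simp

lemma ell_up_slow_growth:
  "\<exists>K>0. \<exists>M\<ge>0. \<forall>t\<ge>1. M \<le> ell_up \<sigma> t \<longrightarrow> 1 \<le> real t * K * Gm \<sigma> (M - ell_up \<sigma> t)"
proof (intro exI conjI allI impI)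
  define K where "K = 1 / (1 - Gm \<sigma> 0)"
  show K: "K > 0" using Gm_less_1[of 0] by (simp add: K_def)
  show "K + 1 \<ge> 0" using K by simp
  fix t :: nat assume t: "t \<ge> 1" and M: "K + 1 \<le> ell_up \<sigma> t"
  define y where "y = ell_up \<sigma> t - (K + 1)"
  have y: "y \<ge> 0" using M by (simp add: y_def)
  obtain k where "k < t" and below: "\<And>i. i \<le> k \<Longrightarrow> ell_up \<sigma> i \<le> y" and above: "y < ell_up \<sigma> (Suc k)"
    using ex_least_nat_less[of "\<lambda>n. y < ell_up \<sigma> n" t] K y by (force simp: y_def not_less)
  have "k \<ge> 1" using above y by (cases k) auto
  \<comment> \<open>From its first crossing of \<open>y\<close>, at most \<open>K\<close> above \<open>y\<close>, the path must still climb by \<open>1\<close>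
    in steps of size at most \<open>K * Gm \<sigma> (-y)\<close>.\<close>
  have "ell_up \<sigma> (Suc k) = ell_up \<sigma> k + Dp \<sigma> (ell_up \<sigma> k)" using \<open>k \<ge> 1\<close> by simp
  also have "\<dots> \<le> y + K"
  proof -
    have "Dp \<sigma> (ell_up \<sigma> k) \<le> Gm \<sigma> (- ell_up \<sigma> k) / (1 - Gm \<sigma> 0)"
      by (rule Dp_le[OF ell_up_nonneg])
    also have "\<dots> \<le> K"
      using Gm_less_1 K unfolding K_def by (intro divide_right_mono) (auto simp: less_imp_le)
    finally show ?thesis using below[of k] by simp
  qed
  finally have "ell_up \<sigma> (Suc k) \<le> y + K" .
  moreover have "ell_up \<sigma> (Suc k + (t - Suc k)) \<le> ell_up \<sigma> (Suc k) + (t - Suc k) * (Gm \<sigma> (-y) / (1 - Gm \<sigma> 0))"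
    using above by (intro ell_up_add_le) auto
  moreover have "real (t - Suc k) * (Gm \<sigma> (-y) / (1 - Gm \<sigma> 0)) \<le> real t * K * Gm \<sigma> (-y)"
    using Gm_pos[of "-y"] Gm_less_1[of 0]
    by (auto simp: K_def intro!: divide_right_mono mult_right_mono)
  ultimately show "1 \<le> real t * K * Gm \<sigma> (K + 1 - ell_up \<sigma> t)"
    using \<open>k < t\<close> by (simp add: y_def)
qed

lemma Gp_ell_up_ge_powr:
  assumes "\<epsilon> > 0"
  shows "\<exists>c>0. \<forall>t\<ge>1. c / real t powr (1 + \<epsilon>) \<le> Gp \<sigma> (- ell_up \<sigma> t)"
proof -
  obtain K M where K: "K > 0" and M: "M \<ge> 0"
    and growth: "\<And>t. t \<ge> 1 \<Longrightarrow> M \<le> ell_up \<sigma> t \<Longrightarrow> 1 \<le> real t * K * Gm \<sigma> (M - ell_up \<sigma> t)"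
    using ell_up_slow_growth by blast
  obtain c0 where c0: "c0 > 0" and tail: "\<And>y. y \<ge> 0 \<Longrightarrow> c0 * Gm \<sigma> (-y) powr (1 + \<epsilon>) \<le> Gp \<sigma> (-(y + M))"
    using Gp_shift_ge_Gm_powr[OF assms M] by blast
  define c where "c = min (Gp \<sigma> (-M)) (c0 / K powr (1 + \<epsilon>))"
  have c: "c > 0" using c0 K Gp_pos by (simp add: c_def)
  have "c / real t powr (1 + \<epsilon>) \<le> Gp \<sigma> (- ell_up \<sigma> t)" if t: "t \<ge> 1" for t
  proof (cases "ell_up \<sigma> t < M")
    case True
    have "real t powr (1 + \<epsilon>) \<ge> 1" using t assms by (intro ge_one_powr_ge_zero) auto
    then have "c / real t powr (1 + \<epsilon>) \<le> c"
      using c by (simp add: divide_le_eq mult_le_cancel_left1)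
    also have "\<dots> \<le> Gp \<sigma> (-M)" by (simp add: c_def)
    also have "\<dots> \<le> Gp \<sigma> (- ell_up \<sigma> t)" using True by (intro Gp_mono) simp
    finally show ?thesis .
  next
    case False
    define y where "y = ell_up \<sigma> t - M"
    have "1 / (K * real t) \<le> Gm \<sigma> (-y)"
      using growth[OF t] False K t by (simp add: y_def field_simps)
    then have Gm_powr: "(1 / (K * real t)) powr (1 + \<epsilon>) \<le> Gm \<sigma> (-y) powr (1 + \<epsilon>)"
      using K t assms by (intro powr_mono2) auto
    have "c / real t powr (1 + \<epsilon>) \<le> c0 / K powr (1 + \<epsilon>) / real t powr (1 + \<epsilon>)"
      by (intro divide_right_mono) (auto simp: c_def)
    also have "\<dots> = c0 * (1 / (K * real t)) powr (1 + \<epsilon>)"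
      using K t by (simp add: powr_divide powr_mult)
    also have "\<dots> \<le> c0 * Gm \<sigma> (-y) powr (1 + \<epsilon>)"
      using Gm_powr c0 by (intro mult_left_mono) auto
    also have "\<dots> \<le> Gp \<sigma> (- ell_up \<sigma> t)"
      using tail[of y] False by (simp add: y_def)
    finally show ?thesis .
  qed
  with c show ?thesis by blast
qed

end

lemma ell_eq_ell_up:
  "(\<forall>r\<in>{1..<n}. action \<sigma> \<omega> r = 1) \<Longrightarrow> ell \<sigma> \<omega> n = ell_up \<sigma> n"
proof (induction n)
  case (Suc n)
  show ?case
  proof (cases "n = 0")
    case False
    then have "ell \<sigma> \<omega> n = ell_up \<sigma> n" "action \<sigma> \<omega> n = 1" using Suc by auto
    then show ?thesis using False by (simp add: action_def Let_def split: if_splits)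
  qed simp
qed simp

lemma all_actions_up_iff:
  "(\<forall>r\<in>{1..<n}. action \<sigma> \<omega> r = 1) \<longleftrightarrow> (\<forall>r\<in>{1..<n}. - ell_up \<sigma> r < Lpriv \<sigma> (\<omega> r))"
proof (induction n)
  case (Suc n)
  have split: "\<And>P. (\<forall>r\<in>{1..<Suc n}. P r) \<longleftrightarrow> (\<forall>r\<in>{1..<n}. P r) \<and> (1 \<le> n \<longrightarrow> P n)"
    by (auto simp: less_Suc_eq)
  show ?case
    unfolding split using Suc ell_eq_ell_up[of n \<sigma> \<omega>] by (auto simp: action_def)
qed simp

lemma T1_eq_iff:
  assumes "t \<ge> 1"
  shows "T1 \<sigma> \<theta> \<omega> = t \<longleftrightarrow> (\<forall>r\<in>{1..<t}. action \<sigma> \<omega> r = \<theta>) \<and> action \<sigma> \<omega> t \<noteq> \<theta>"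
proof
  assume T: "T1 \<sigma> \<theta> \<omega> = t"
  then have ex: "\<exists>t\<ge>1. action \<sigma> \<omega> t \<noteq> \<theta>" using assms by (auto simp: T1_def split: if_splits)
  then have t: "t = (LEAST t. t \<ge> 1 \<and> action \<sigma> \<omega> t \<noteq> \<theta>)" using T by (simp add: T1_def)
  show "(\<forall>r\<in>{1..<t}. action \<sigma> \<omega> r = \<theta>) \<and> action \<sigma> \<omega> t \<noteq> \<theta>"
    using LeastI_ex[OF ex] not_less_Least[of _ "\<lambda>t. t \<ge> 1 \<and> action \<sigma> \<omega> t \<noteq> \<theta>"]
    unfolding t[symmetric] by auto
next
  assume A: "(\<forall>r\<in>{1..<t}. action \<sigma> \<omega> r = \<theta>) \<and> action \<sigma> \<omega> t \<noteq> \<theta>"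
  then have "(LEAST t. t \<ge> 1 \<and> action \<sigma> \<omega> t \<noteq> \<theta>) = t"
    using assms by (intro Least_equality) (auto simp: not_less[symmetric])
  then show "T1 \<sigma> \<theta> \<omega> = t" using A assms by (auto simp: T1_def)
qed

lemma T1_plus_eq_iff:
  assumes "t \<ge> 1"
  shows "T1 \<sigma> 1 \<omega> = t \<longleftrightarrow> (\<forall>i\<in>{1..t}. \<omega> i \<in>
    (if i < t then {s. - ell_up \<sigma> i < Lpriv \<sigma> s} else {s. Lpriv \<sigma> s \<le> - ell_up \<sigma> t}))"
proof -
  have "action \<sigma> \<omega> t \<noteq> 1 \<longleftrightarrow> Lpriv \<sigma> (\<omega> t) \<le> - ell_up \<sigma> t"
    if "\<forall>r\<in>{1..<t}. action \<sigma> \<omega> r = 1"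
    using ell_eq_ell_up[OF that] by (auto simp: action_def)
  then show ?thesis
    using assms unfolding T1_eq_iff[OF assms] all_actions_up_iff
    by (auto simp: Ball_def le_less)
qed

lemma measure_T1_plus_eq:
  assumes \<sigma>_pos: "\<sigma> > 0" and t: "t \<ge> 1"
  shows "measure (signals \<sigma> 1) {\<omega> \<in> space (signals \<sigma> 1). T1 \<sigma> 1 \<omega> = t}
       = (\<Prod>i\<in>{1..<t}. 1 - Gp \<sigma> (- ell_up \<sigma> i)) * Gp \<sigma> (- ell_up \<sigma> t)"
proof -
  interpret P: product_prob_space "\<lambda>_::nat. sig_dist \<sigma> 1" UNIV
    by (rule product_prob_spaceI) (rule prob_space_sig_dist[OF \<sigma>_pos])
  define X where "X i = (if i < t then {s. - ell_up \<sigma> i < Lpriv \<sigma> s} else {s. Lpriv \<sigma> s \<le> - ell_up \<sigma> t})" for i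
  have "measure (signals \<sigma> 1) {\<omega> \<in> space (signals \<sigma> 1). T1 \<sigma> 1 \<omega> = t}
      = measure (signals \<sigma> 1) {\<omega> \<in> space (signals \<sigma> 1). \<forall>i\<in>{1..t}. \<omega> i \<in> X i}"
    unfolding X_def T1_plus_eq_iff[OF t] ..
  also have "\<dots> = (\<Prod>i\<in>{1..t}. measure (sig_dist \<sigma> 1) (X i))"
  proof -
    have "emeasure (signals \<sigma> 1) {\<omega> \<in> space (signals \<sigma> 1). \<forall>i\<in>{1..t}. \<omega> i \<in> X i}
        = (\<Prod>i\<in>{1..t}. emeasure (sig_dist \<sigma> 1) (X i))"
      unfolding signals_def by (rule P.emeasure_PiM_Collect) (auto simp: X_def)
    then show ?thesis
      by (simp add: signals_def P.emeasure_eq_measure P.M.emeasure_eq_measure prod_ennreal prod_nonneg)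
  qed
  also have "\<dots> = (\<Prod>i\<in>{1..<t}. measure (sig_dist \<sigma> 1) (X i)) * measure (sig_dist \<sigma> 1) (X t)"
    using t by (simp add: prod.atLeastLessThan_Suc atLeastLessThanSuc_atLeastAtMost[symmetric]
        del: atLeastLessThanSuc_atLeastAtMost)
  also have "\<dots> = (\<Prod>i\<in>{1..<t}. 1 - Gp \<sigma> (- ell_up \<sigma> i)) * Gp \<sigma> (- ell_up \<sigma> t)"
  proof -
    have "X i = UNIV - {s. Lpriv \<sigma> s \<le> - ell_up \<sigma> i}" if "i < t" for i
      using that by (auto simp: X_def)
    then have "measure (sig_dist \<sigma> 1) (X i) = 1 - Gp \<sigma> (- ell_up \<sigma> i)" if "i < t" for i
      using that P.M.prob_compl[of "{s. Lpriv \<sigma> s \<le> - ell_up \<sigma> i}"] by (simp add: Gp_eq_measure)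
    then show ?thesis by (simp add: X_def Gp_eq_measure)
  qed
  finally show ?thesis .
qed

theorem theorem5:
  fixes \<sigma> \<epsilon> :: real
  assumes "\<sigma> > 0" and "\<epsilon> > 0"
  shows "\<exists>k>0. \<forall>t::nat. t \<ge> 1 \<longrightarrow> probT1 \<sigma> t \<ge> k / (real t) powr (1 + \<epsilon>)"
proof -
  obtain a where a: "a > 0" and prod: "\<And>N. a \<le> (\<Prod>n\<in>{1..<N}. 1 - Gp \<sigma> (- ell_up \<sigma> n))"
    using prod_no_mistake_ge[OF assms(1)] by blast
  obtain c where c: "c > 0" and mistake: "\<And>t. t \<ge> 1 \<Longrightarrow> c / real t powr (1 + \<epsilon>) \<le> Gp \<sigma> (- ell_up \<sigma> t)"
    using Gp_ell_up_ge_powr[OF assms] by blast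
  have "a * c / 2 / real t powr (1 + \<epsilon>) \<le> probT1 \<sigma> t" if t: "t \<ge> 1" for t
  proof -
    have "a * c / 2 / real t powr (1 + \<epsilon>) = a * (c / real t powr (1 + \<epsilon>)) / 2" by simp
    also have "\<dots> \<le> (\<Prod>n\<in>{1..<t}. 1 - Gp \<sigma> (- ell_up \<sigma> n)) * Gp \<sigma> (- ell_up \<sigma> t) / 2"
      using a prod[of t] mistake[OF t] c by (intro divide_right_mono mult_mono) auto
    also have "\<dots> = measure (signals \<sigma> 1) {\<omega> \<in> space (signals \<sigma> 1). T1 \<sigma> 1 \<omega> = t} / 2"
      by (simp add: measure_T1_plus_eq[OF assms(1) t])
    also have "\<dots> \<le> probT1 \<sigma> t" by (simp add: probT1_def)
    finally show ?thesis .
  qed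
  with a c show ?thesis by (intro exI[of _ "a * c / 2"]) auto
qed

end
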